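(* Let $\mathcal H=\mathcal H_A\otimes\mathcal H_B\otimes\mathcal H_C\otimes\mathcal H_D$ with finite-dimensional factors, and let $|\Psi\rangle=|\psi\rangle\otimes|\phi\rangle$, where $|\psi\rangle$ is a unit vector in the tensor product of three of the four factors and $|\phi\rangle$ is a unit vector in the remaining factor. Then for all $\alpha,\beta>0$, $\langle\Psi|\rho_{AB}^\alpha\rho_{BC}^\beta|\Psi\rangle>0$; in particular $\omega_{\alpha,\beta}(|\Psi\rangle)=1$.
   Context: $\rho_R$ is the reduced density operator of $|\Psi\rangle\langle\Psi|$ on the factors in $R$ (acting as identity on the others), $AB$ means $A\cup B$, etc. Powers are defined by spectral calculus with $0^\alpha=0$. $\omega_{\alpha,\beta}=\langle\rho_{AB}^\alpha\rho_{BC}^\beta\rangle/|\langle\rho_{AB}^\alpha\rho_{BC}^\beta\rangle|$. *)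

theory Defs
  imports "HOL-Analysis.Analysis"
begin

text \<open>Vectors of H = H_A (x) H_B (x) H_C (x) H_D are represented in the product basis,
  i.e. as elements of complex ^ ('a * 'b * 'c * 'd) for finite index types 'a, 'b, 'c, 'd
  (the dimensions of the factors).\<close>

type_synonym ('a, 'b, 'c, 'd) state = "complex ^ ('a \<times> 'b \<times> 'c \<times> 'd)"
type_synonym ('a, 'b, 'c, 'd) oper =
  "complex ^ ('a \<times> 'b \<times> 'c \<times> 'd) ^ ('a \<times> 'b \<times> 'c \<times> 'd)"

text \<open>Reduced density operator of |Psi><Psi| on AB, acting as the identity on C and D:
  (rho_AB (x) I_CD)((a,b,c,d),(a',b',c',d')) = [c=c'][d=d'] sum_{x,y} Psi(a,b,x,y) conj Psi(a',b',x,y).\<close>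
definition rhoAB :: "('a::finite, 'b::finite, 'c::finite, 'd::finite) state \<Rightarrow> ('a, 'b, 'c, 'd) oper" where
  "rhoAB \<Psi> = (\<chi> i j. case (i, j) of ((a, b, c, d), (a', b', c', d')) \<Rightarrow>
      (if c = c' \<and> d = d'
       then (\<Sum>x\<in>UNIV. \<Sum>y\<in>UNIV. \<Psi> $ (a, b, x, y) * cnj (\<Psi> $ (a', b', x, y)))
       else 0))"

text \<open>Reduced density operator of |Psi><Psi| on BC, acting as the identity on A and D.\<close>
definition rhoBC :: "('a::finite, 'b::finite, 'c::finite, 'd::finite) state \<Rightarrow> ('a, 'b, 'c, 'd) oper" where
  "rhoBC \<Psi> = (\<chi> i j. case (i, j) of ((a, b, c, d), (a', b', c', d')) \<Rightarrow>
      (if a = a' \<and> d = d'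
       then (\<Sum>x\<in>UNIV. \<Sum>y\<in>UNIV. \<Psi> $ (x, b, c, y) * cnj (\<Psi> $ (x, b', c', y)))
       else 0))"

text \<open>Power of a (Hermitian, positive semidefinite) matrix by spectral calculus, with 0^alpha = 0:
  the operator acting on every eigenvector of M with eigenvalue l as multiplication by l^alpha.
  (For Hermitian M the eigenvectors span the space, so this determines the operator uniquely;
  eigenvalues are real, and Isabelle's powr satisfies 0 powr alpha = 0.)\<close>
definition mpow :: "complex ^ 'n ^ 'n \<Rightarrow> real \<Rightarrow> complex ^ 'n ^ 'n" where
  "mpow M \<alpha> = (THE X. \<forall>l v. M *v v = l *s v \<longrightarrow> X *v v = complex_of_real (Re l powr \<alpha>) *s v)"

definition expect :: "complex ^ 'n ^ 'n \<Rightarrow> complex ^ 'n \<Rightarrow> complex" where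
  "expect X \<Psi> = (\<Sum>i\<in>UNIV. cnj (\<Psi> $ i) * (X *v \<Psi>) $ i)"

definition omega :: "real \<Rightarrow> real \<Rightarrow> ('a::finite, 'b::finite, 'c::finite, 'd::finite) state \<Rightarrow> complex" where
  "omega \<alpha> \<beta> \<Psi> =
     (let z = expect (mpow (rhoAB \<Psi>) \<alpha> ** mpow (rhoBC \<Psi>) \<beta>) \<Psi> in z / complex_of_real (cmod z))"

end

theory Submission
  imports Defs
begin

text \<open>For a pure state the reduced operator of a subsystem and that of its complement act
  identically on \<open>\<Psi>\<close> and commute, so \<open>f(\<rho>\<^sub>A\<^sub>B) \<Psi> = f(\<rho>\<^sub>C\<^sub>D) \<Psi>\<close> for every \<open>f\<close>; likewise
  \<open>\<rho>\<^sub>B\<^sub>C\<close> may be replaced by \<open>\<rho>\<^sub>A\<^sub>D\<close>. If the unit vector \<open>\<phi>\<close> lives on the factor \<open>X\<close>, choose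
  from each pair the subsystem containing \<open>X\<close>: the two reduced operators are then the projection
  onto \<open>\<phi>\<close> tensored with operators on disjoint factors, hence they commute. For commuting Hermitian
  \<open>K\<close>, \<open>L\<close> one has \<open>\<langle>\<Psi>, K\<^sup>a L\<^sup>b \<Psi>\<rangle> = \<parallel>K\<^sup>a\<^sup>/\<^sup>2 L\<^sup>b\<^sup>/\<^sup>2 \<Psi>\<parallel>\<^sup>2\<close>, which is positive because \<open>\<Psi>\<close>
  is orthogonal to the kernels of both. The powers are handled by a functional calculus resting on
  the spectral theorem for Hermitian matrices, proved by maximising the Rayleigh quotient.\<close>

section \<open>Hermitian inner product\<close>

definition cinner :: "complex^'n \<Rightarrow> complex^'n \<Rightarrow> complex" where
  "cinner v w = (\<Sum>i\<in>UNIV. cnj (v$i) * w$i)"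

definition hermitian :: "complex^'n^'n \<Rightarrow> bool" where
  "hermitian M \<longleftrightarrow> (\<forall>i j. M$i$j = cnj (M$j$i))"

lemma cinner_add_left: "cinner (u + v) w = cinner u w + cinner v w"
  by (simp add: cinner_def distrib_right sum.distrib)

lemma cinner_add_right: "cinner u (v + w) = cinner u v + cinner u w"
  by (simp add: cinner_def distrib_left sum.distrib)

lemma cinner_diff_right: "cinner u (v - w) = cinner u v - cinner u w"
  by (simp add: cinner_def right_diff_distrib sum_subtractf)

lemma cinner_diff_left: "cinner (u - v) w = cinner u w - cinner v w"
  by (simp add: cinner_def left_diff_distrib sum_subtractf)

lemma cinner_scale_left: "cinner (c *s v) w = cnj c * cinner v w"
  by (simp add: cinner_def sum_distrib_left algebra_simps)

lemma cinner_scale_right: "cinner v (c *s w) = c * cinner v w"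
  by (simp add: cinner_def sum_distrib_left algebra_simps)

lemma cinner_zero_left [simp]: "cinner 0 v = 0"
  by (simp add: cinner_def)

lemma cinner_zero_right [simp]: "cinner v 0 = 0"
  by (simp add: cinner_def)

lemma cinner_sum_left: "cinner (\<Sum>s\<in>S. f s) v = (\<Sum>s\<in>S. cinner (f s) v)"
  by (induct S rule: infinite_finite_induct) (auto simp: cinner_add_left)

lemma cinner_sum_right: "cinner v (\<Sum>s\<in>S. f s) = (\<Sum>s\<in>S. cinner v (f s))"
  by (induct S rule: infinite_finite_induct) (auto simp: cinner_add_right)

lemma cinner_commute: "cinner w v = cnj (cinner v w)"
  by (simp add: cinner_def mult.commute)

lemma cinner_self: "cinner v v = complex_of_real ((norm v)\<^sup>2)"
proof -
  have "cinner v v = (\<Sum>i\<in>UNIV. complex_of_real ((cmod (v$i))\<^sup>2))"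
    unfolding cinner_def
    by (intro sum.cong refl) (simp add: complex_norm_square mult.commute del: of_real_power)
  also have "\<dots> = complex_of_real ((norm v)\<^sup>2)"
    by (simp add: norm_vec_def L2_set_def sum_nonneg del: of_real_power)
  finally show ?thesis .
qed

lemma cinner_self_eq_0: "cinner v v = 0 \<longleftrightarrow> v = 0"
  by (simp add: cinner_self)

lemma matrix_vector_mult_scale: "(M::complex^'n^'m) *v (c *s v) = c *s (M *v v)"
  by (simp add: vec_eq_iff matrix_vector_mult_def sum_distrib_left algebra_simps)

lemma matrix_vector_mult_sum: "(M::complex^'n^'m) *v (\<Sum>s\<in>S. f s) = (\<Sum>s\<in>S. M *v f s)"
  by (induct S rule: infinite_finite_induct) (auto simp: matrix_vector_right_distrib)

lemma matrix_vector_mult_lincomb: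
  "(M::complex^'n^'m) *v (\<Sum>s\<in>S. c s *s f s) = (\<Sum>s\<in>S. c s *s (M *v f s))"
  by (simp add: matrix_vector_mult_sum matrix_vector_mult_scale)

lemma hermitian_cinner:
  assumes "hermitian M"
  shows "cinner v (M *v w) = cinner (M *v v) w"
proof -
  have "cinner v (M *v w) = (\<Sum>i\<in>UNIV. \<Sum>j\<in>UNIV. cnj (v$i) * M$i$j * w$j)"
    by (simp add: cinner_def matrix_vector_mult_def sum_distrib_left mult.assoc)
  also have "\<dots> = (\<Sum>j\<in>UNIV. \<Sum>i\<in>UNIV. cnj (v$i) * M$i$j * w$j)"
    by (rule sum.swap)
  also have "\<dots> = cinner (M *v v) w"
  proof -
    have "\<And>i j. cnj (M$j$i) = M$i$j" using assms unfolding hermitian_def by (metis complex_cnj_cnj)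
    then show ?thesis
      by (simp add: cinner_def matrix_vector_mult_def sum_distrib_left cnj_sum mult_ac)
  qed
  finally show ?thesis .
qed

lemma scaleR_eq_of_real_scale: "r *\<^sub>R x = complex_of_real r *s (x :: complex^'n)"
  unfolding vec_eq_iff vector_scaleR_component by (simp add: scaleR_conv_of_real)

section \<open>Spectral theorem for Hermitian matrices\<close>

definition orthonormal :: "(complex^'n) set \<Rightarrow> bool" where
  "orthonormal S \<longleftrightarrow> (\<forall>s\<in>S. cinner s s = 1) \<and> (\<forall>s\<in>S. \<forall>t\<in>S. s \<noteq> t \<longrightarrow> cinner s t = 0)"

lemma orthonormal_subset: "orthonormal S \<Longrightarrow> T \<subseteq> S \<Longrightarrow> orthonormal T"
  by (auto simp: orthonormal_def)

lemma orthonormal_cinner_lincomb: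
  assumes "orthonormal S" "finite S" "t \<in> S"
  shows "cinner t (\<Sum>s\<in>S. c s *s s) = c t"
proof -
  have "cinner t (\<Sum>s\<in>S. c s *s s) = (\<Sum>s\<in>S. if s = t then c s else 0)"
    unfolding cinner_sum_right cinner_scale_right
    by (intro sum.cong refl) (use assms in \<open>auto simp: orthonormal_def\<close>)
  then show ?thesis using assms(2,3) by simp
qed

lemma orthonormal_finite_card_le:
  fixes S :: "(complex^'n) set"
  assumes "orthonormal S"
  shows "finite S \<and> card S \<le> CARD('n)"
proof -
  have "\<not> vec.dependent S"
  proof
    assume "vec.dependent S"
    then obtain T u v where T: "finite T" "T \<subseteq> S" "(\<Sum>v\<in>T. u v *s v) = 0" and v: "v \<in> T" "u v \<noteq> 0"
      unfolding vec.dependent_explicit by blast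
    have "u v = cinner v (\<Sum>w\<in>T. u w *s w)"
      using orthonormal_subset[OF assms T(2)] T(1) v(1) by (simp add: orthonormal_cinner_lincomb)
    then show False using T(3) v(2) by simp
  qed
  then have "finite S" "card S \<le> vec.dim S"
    using vec.independent_bound_general by auto
  moreover have "vec.dim S \<le> vec.dim (UNIV :: (complex^'n) set)"
    by (rule vec.dim_subset) simp
  ultimately show ?thesis by (simp add: card_cart_basis)
qed

lemma quadratic_nonneg_imp_linear_coeff_zero:
  fixes a b :: real
  assumes "\<And>t. 0 \<le> 2 * t * b + t\<^sup>2 * a"
  shows "b = 0"
proof (rule ccontr)
  assume "b \<noteq> 0"
  define c where "c = \<bar>a\<bar> + 1"
  have "c > 0" by (simp add: c_def)
  have "(2 * (- b / c) * b + (- b / c)\<^sup>2 * a) * c\<^sup>2 = b\<^sup>2 * (a - 2 * c)"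
    using \<open>c > 0\<close> by (simp add: field_simps power2_eq_square)
  also have "\<dots> < 0"
    using \<open>b \<noteq> 0\<close> by (intro mult_pos_neg) (auto simp: c_def)
  finally show False
    using assms[of "- b / c"] \<open>c > 0\<close> by (simp add: mult_less_0_iff)
qed

text \<open>If the Rayleigh quotient of \<open>M\<close> on an invariant subspace \<open>W\<close> attains its maximum \<open>lam\<close>
  at \<open>v\<close>, then the form \<open>u \<mapsto> \<langle>u, (lam - M) u\<rangle>\<close> is nonnegative on \<open>W\<close> and vanishes at \<open>v\<close>;
  so \<open>(lam - M) v\<close> is orthogonal to \<open>W\<close>, and lies in \<open>W\<close>.\<close>
lemma rayleigh_maximizer_eigenvector:
  fixes M :: "complex^'n^'n"
  assumes herm: "hermitian M" and W: "vec.subspace W" and inv: "\<And>x. x \<in> W \<Longrightarrow> M *v x \<in> W"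
    and v: "v \<in> W"
    and le: "\<And>u. u \<in> W \<Longrightarrow> Re (cinner u (M *v u)) \<le> lam * (norm u)\<^sup>2"
    and eq: "Re (cinner v (M *v v)) = lam * (norm v)\<^sup>2"
  shows "M *v v = complex_of_real lam *s v"
proof -
  define N where "N x = complex_of_real lam *s x - M *v x" for x
  define Q where "Q u = Re (cinner u (N u))" for u
  have Q_eq: "Q u = lam * (norm u)\<^sup>2 - Re (cinner u (M *v u))" for u
    by (simp add: Q_def N_def cinner_diff_right cinner_scale_right cinner_self del: of_real_power)
  have N_add: "N (x + c *s y) = N x + c *s N y" for x y c
    by (simp add: N_def matrix_vector_right_distrib matrix_vector_mult_scale vector_add_ldistrib
        vector_smult_assoc vector_ssub_ldistrib algebra_simps)
  have N_self_adjoint: "cinner x (N y) = cinner (N x) y" for x y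
    by (simp add: N_def cinner_diff_left cinner_diff_right cinner_scale_left cinner_scale_right
        hermitian_cinner[OF herm])
  have NvW: "N v \<in> W"
    unfolding N_def using W v inv by (intro vec.subspace_diff vec.subspace_scale) auto
  have "Re (cinner u (N v)) = 0" if u: "u \<in> W" for u
  proof (rule quadratic_nonneg_imp_linear_coeff_zero)
    fix t :: real
    have "v + complex_of_real t *s u \<in> W"
      using W v u by (intro vec.subspace_add vec.subspace_scale)
    then have "0 \<le> Q (v + complex_of_real t *s u)" by (simp add: Q_eq le)
    also have "Re (cinner v (N u)) = Re (cinner u (N v))"
      using N_self_adjoint[of v u] cinner_commute[of "N v" u] by simp
    then have "Q (v + complex_of_real t *s u) = Q v + 2 * t * Re (cinner u (N v)) + t\<^sup>2 * Q u"
      by (simp add: Q_def N_add cinner_add_left cinner_add_right cinner_scale_left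
          cinner_scale_right power2_eq_square algebra_simps)
    finally show "0 \<le> 2 * t * Re (cinner u (N v)) + t\<^sup>2 * Q u"
      using eq by (simp add: Q_eq)
  qed
  then have "Re (cinner (N v) (N v)) = 0" using NvW by blast
  then have "N v = 0" by (simp add: cinner_self cinner_self_eq_0)
  then show ?thesis by (simp add: N_def)
qed

lemma continuous_on_quadratic_form:
  "continuous_on A (\<lambda>x::complex^'n. Re (cinner x (M *v x)))"
proof -
  have "continuous_on A (\<lambda>x::complex^'n. x$i)" for i
    by (rule linear_continuous_on) (rule bounded_linear_vec_nth)
  then show ?thesis
    unfolding cinner_def matrix_vector_mult_def vec_lambda_beta
    by (intro continuous_on_Re continuous_on_sum continuous_on_mult continuous_on_const
        continuous_on_cnj)
qed

lemma hermitian_eigenvector_in_invariant_subspace: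
  fixes M :: "complex^'n^'n"
  assumes herm: "hermitian M" and W: "vec.subspace W" and inv: "\<And>x. x \<in> W \<Longrightarrow> M *v x \<in> W"
    and w: "w \<in> W" "w \<noteq> 0"
  shows "\<exists>v l. v \<in> W \<and> cinner v v = 1 \<and> M *v v = complex_of_real l *s v"
proof -
  define F where "F x = Re (cinner x (M *v x))" for x
  have F_scale: "F (r *\<^sub>R x) = r\<^sup>2 * F x" for r x
    by (simp add: F_def scaleR_eq_of_real_scale matrix_vector_mult_scale cinner_scale_left
        cinner_scale_right power2_eq_square)
  have W_scaleR: "r *\<^sub>R x \<in> W" if "x \<in> W" for r x
    using W that by (simp add: scaleR_eq_of_real_scale vec.subspace_scale)
  have "subspace W"
    using W W_scaleR by (simp add: subspace_def vec.subspace_def)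
  then have "compact (sphere 0 1 \<inter> W)"
    by (intro compact_Int_closed closed_subspace) auto
  moreover have "(1 / norm w) *\<^sub>R w \<in> sphere 0 1 \<inter> W"
    using w W_scaleR by simp
  ultimately obtain v where v: "v \<in> sphere 0 1 \<inter> W" and max: "\<And>y. y \<in> sphere 0 1 \<inter> W \<Longrightarrow> F y \<le> F v"
    using continuous_attains_sup[of "sphere 0 1 \<inter> W" F] continuous_on_quadratic_form
    unfolding F_def by blast
  have "F u \<le> F v * (norm u)\<^sup>2" if u: "u \<in> W" for u
  proof (cases "u = 0")
    case False
    have "F ((1 / norm u) *\<^sub>R u) \<le> F v"
      using u False W_scaleR by (intro max) simp
    then show ?thesis
      using False by (simp add: F_scale field_simps)
  qed (simp add: F_def)
  then have "M *v v = complex_of_real (F v) *s v"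
    using v by (intro rayleigh_maximizer_eigenvector[OF herm W inv]) (auto simp: F_def)
  then show ?thesis
    using v by (auto simp: cinner_self)
qed

definition eigenbasis :: "complex^'n^'n \<Rightarrow> (complex^'n) set \<Rightarrow> (complex^'n \<Rightarrow> real) \<Rightarrow> bool" where
  "eigenbasis M S lam \<longleftrightarrow> finite S \<and> orthonormal S \<and> (\<forall>s\<in>S. M *v s = complex_of_real (lam s) *s s)
     \<and> (\<forall>v. v = (\<Sum>s\<in>S. cinner s v *s s))"

text \<open>Spectral theorem: a maximal orthonormal set of eigenvectors spans, since the orthogonal
  complement of a set of eigenvectors is invariant and so contains a further eigenvector.\<close>
theorem hermitian_eigenbasis_exists:
  fixes M :: "complex^'n^'n"
  assumes herm: "hermitian M"
  shows "\<exists>S lam. eigenbasis M S lam"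
proof -
  define P where
    "P S \<longleftrightarrow> orthonormal S \<and> (\<exists>lam. \<forall>s\<in>S. M *v s = complex_of_real (lam s) *s s)" for S
  have "P {}" by (simp add: P_def orthonormal_def)
  moreover have "card S < CARD('n) + 1" if "P S" for S
    using that by (auto simp: P_def dest!: orthonormal_finite_card_le)
  ultimately obtain S where "P S" and S_max: "\<And>S'. P S' \<Longrightarrow> card S' \<le> card S"
    using ex_has_greatest_nat[of P "{}" card "CARD('n) + 1"] by blast
  then obtain lam where S: "orthonormal S"
    and eig: "\<And>s. s \<in> S \<Longrightarrow> M *v s = complex_of_real (lam s) *s s"
    by (auto simp: P_def)
  have fin: "finite S" using S orthonormal_finite_card_le by blast
  have complement_zero: "w = 0" if w: "\<forall>s\<in>S. cinner s w = 0" for w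
  proof (rule ccontr)
    assume "w \<noteq> 0"
    define W where "W = {x. \<forall>s\<in>S. cinner s x = 0}"
    have "vec.subspace W"
      by (auto simp: W_def vec.subspace_def cinner_add_right cinner_scale_right)
    moreover have "M *v x \<in> W" if "x \<in> W" for x
      using that eig by (auto simp: W_def hermitian_cinner[OF herm] cinner_scale_left)
    ultimately obtain v l where v: "v \<in> W" "cinner v v = 1" "M *v v = complex_of_real l *s v"
      using hermitian_eigenvector_in_invariant_subspace[OF herm] w \<open>w \<noteq> 0\<close> W_def by blast
    have "v \<notin> S" using v by (auto simp: W_def)
    have "cinner s v = 0" "cinner v s = 0" if "s \<in> S" for s
      using v(1) that cinner_commute[of v s] by (auto simp: W_def)
    then have "orthonormal (insert v S)"
      using S v(2) unfolding orthonormal_def by auto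
    moreover have "\<forall>s\<in>insert v S. M *v s = complex_of_real ((lam(v := l)) s) *s s"
      using v eig \<open>v \<notin> S\<close> by auto
    ultimately have "card (insert v S) \<le> card S"
      using S_max P_def by blast
    then show False using \<open>v \<notin> S\<close> fin by simp
  qed
  have "v = (\<Sum>s\<in>S. cinner s v *s s)" for v
    using complement_zero[of "v - (\<Sum>s\<in>S. cinner s v *s s)"]
    by (simp add: cinner_diff_right orthonormal_cinner_lincomb[OF S fin])
  then show ?thesis
    using fin S eig unfolding eigenbasis_def by blast
qed

section \<open>Functional calculus\<close>

text \<open>Like \<open>mpow\<close>, \<open>matfun f M\<close> is a definite description that is pinned down only when the
  eigenvectors of \<open>M\<close> span, which is why every lemma below assumes \<open>hermitian M\<close>.\<close>
definition matfun :: "(real \<Rightarrow> real) \<Rightarrow> complex^'n^'n \<Rightarrow> complex^'n^'n" where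
  "matfun f M = (THE X. \<forall>l v. M *v v = l *s v \<longrightarrow> X *v v = complex_of_real (f (Re l)) *s v)"

lemma mpow_eq_matfun: "mpow M a = matfun (\<lambda>x. x powr a) M"
  by (simp add: mpow_def matfun_def)

lemma eigenbasis_cinner_eigenvector:
  assumes herm: "hermitian M" and S: "eigenbasis M S lam" "s \<in> S" and v: "M *v v = l *s v"
  shows "complex_of_real (lam s) * cinner s v = l * cinner s v"
proof -
  have "complex_of_real (lam s) * cinner s v = cinner (M *v s) v"
    using S by (simp add: eigenbasis_def cinner_scale_left)
  also have "\<dots> = l * cinner s v"
    by (simp add: hermitian_cinner[OF herm, symmetric] v cinner_scale_right)
  finally show ?thesis .
qed

lemma outer_product_sum_apply:
  "(\<chi> i j. \<Sum>s\<in>S. c s * s$i * cnj (s$j)) *v v = (\<Sum>s\<in>S. (c s * cinner s v) *s s)"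
proof -
  have "((\<chi> i j. \<Sum>s\<in>S. c s * s$i * cnj (s$j)) *v v)$i
      = (\<Sum>s\<in>S. \<Sum>j\<in>UNIV. c s * s$i * cnj (s$j) * v$j)" for i
    by (simp add: matrix_vector_mult_def sum_distrib_right sum.swap[of _ UNIV S])
  then show ?thesis
    by (simp add: vec_eq_iff sum_component cinner_def sum_distrib_left mult_ac)
qed

lemma eigenbasis_expansion_eigenvector:
  assumes herm: "hermitian M" and S: "eigenbasis M S lam" and w: "M *v w = l *s w"
  shows "(\<Sum>s\<in>S. (complex_of_real (f (lam s)) * cinner s w) *s s) = complex_of_real (f (Re l)) *s w"
proof -
  have span: "w = (\<Sum>s\<in>S. cinner s w *s s)"
    using S unfolding eigenbasis_def by blast
  have "(\<Sum>s\<in>S. (complex_of_real (f (lam s)) * cinner s w) *s s)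
      = (\<Sum>s\<in>S. (complex_of_real (f (Re l)) * cinner s w) *s s)"
  proof (intro sum.cong refl)
    fix s assume "s \<in> S"
    then have "cinner s w = 0 \<or> l = complex_of_real (lam s)"
      using eigenbasis_cinner_eigenvector[OF herm S _ w] by auto
    then show "(complex_of_real (f (lam s)) * cinner s w) *s s
        = (complex_of_real (f (Re l)) * cinner s w) *s s"
      by auto
  qed
  also have "\<dots> = complex_of_real (f (Re l)) *s w"
    by (subst (2) span) (simp add: vec_eq_iff sum_component sum_distrib_left mult.assoc)
  finally show ?thesis .
qed

lemma matfun_eq_outer_product_sum:
  fixes M :: "complex^'n^'n"
  assumes herm: "hermitian M" and S: "eigenbasis M S lam"
  shows "matfun f M = (\<chi> i j. \<Sum>s\<in>S. complex_of_real (f (lam s)) * s$i * cnj (s$j))"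
    (is "_ = ?X")
  unfolding matfun_def
proof (rule the_equality)
  show "\<forall>l w. M *v w = l *s w \<longrightarrow> ?X *v w = complex_of_real (f (Re l)) *s w"
    by (simp add: outer_product_sum_apply eigenbasis_expansion_eigenvector[OF herm S])
next
  fix Y assume Y: "\<forall>l w. M *v w = l *s w \<longrightarrow> Y *v w = complex_of_real (f (Re l)) *s w"
  have span: "v = (\<Sum>s\<in>S. cinner s v *s s)"
    and eig: "\<And>s. s \<in> S \<Longrightarrow> M *v s = complex_of_real (lam s) *s s" for v
    using S unfolding eigenbasis_def by blast+
  have Y_eig: "Y *v s = complex_of_real (f (lam s)) *s s" if "s \<in> S" for s
    using Y eig[OF that] by (metis Re_complex_of_real)
  have "Y *v v = ?X *v v" for v
  proof -
    have "Y *v v = Y *v (\<Sum>s\<in>S. cinner s v *s s)"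
      by (simp flip: span)
    also have "\<dots> = (\<Sum>s\<in>S. cinner s v *s (Y *v s))"
      by (rule matrix_vector_mult_lincomb)
    also have "\<dots> = ?X *v v"
      unfolding outer_product_sum_apply
      by (intro sum.cong refl) (simp add: Y_eig vector_smult_assoc mult.commute)
    finally show ?thesis .
  qed
  then show "Y = ?X"
    by (simp add: matrix_eq)
qed

lemma matfun_expansion:
  assumes "hermitian M" "eigenbasis M S lam"
  shows "matfun f M *v v = (\<Sum>s\<in>S. (complex_of_real (f (lam s)) * cinner s v) *s s)"
  by (simp add: matfun_eq_outer_product_sum[OF assms] outer_product_sum_apply)

lemma matfun_eigenvector:
  assumes "hermitian M" "M *v v = l *s v"
  shows "matfun f M *v v = complex_of_real (f (Re l)) *s v"
proof -
  obtain S lam where S: "eigenbasis M S lam"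
    using hermitian_eigenbasis_exists[OF assms(1)] by blast
  show ?thesis
    using matfun_expansion[OF assms(1) S] eigenbasis_expansion_eigenvector[OF assms(1) S assms(2)]
    by simp
qed

lemma matfun_mult:
  assumes herm: "hermitian M"
  shows "matfun f M *v (matfun g M *v v) = matfun (\<lambda>x. f x * g x) M *v v"
proof -
  obtain S lam where S: "eigenbasis M S lam"
    using hermitian_eigenbasis_exists[OF herm] by blast
  have "matfun f M *v s = complex_of_real (f (lam s)) *s s" if "s \<in> S" for s
    using S that
    by (intro matfun_eigenvector[OF herm, where l = "complex_of_real (lam s)", simplified])
      (auto simp: eigenbasis_def)
  then show ?thesis
    by (simp add: matfun_expansion[OF herm S] matrix_vector_mult_lincomb vector_smult_assoc mult_ac
        cong: sum.cong)
qed

lemma matfun_cinner: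
  assumes herm: "hermitian M"
  shows "cinner v (matfun f M *v w) = cinner (matfun f M *v v) w"
proof -
  obtain S lam where S: "eigenbasis M S lam"
    using hermitian_eigenbasis_exists[OF herm] by blast
  show ?thesis
    by (simp add: matfun_expansion[OF herm S] cinner_sum_left cinner_sum_right cinner_scale_left
        cinner_scale_right cinner_commute[of v] mult_ac)
qed

lemma matfun_commute:
  assumes herm: "hermitian M" and DM: "D ** M = M ** D"
  shows "D *v (matfun f M *v v) = matfun f M *v (D *v v)"
proof -
  obtain S lam where S: "eigenbasis M S lam"
    using hermitian_eigenbasis_exists[OF herm] by blast
  have span: "v = (\<Sum>s\<in>S. cinner s v *s s)" for v
    using S by (simp add: eigenbasis_def)
  have D_eig: "matfun f M *v (D *v s) = complex_of_real (f (lam s)) *s (D *v s)" if "s \<in> S" for s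
  proof -
    have "M *v (D *v s) = D *v (M *v s)" by (simp add: matrix_vector_mul_assoc DM)
    also have "\<dots> = complex_of_real (lam s) *s (D *v s)"
      using S that by (simp add: eigenbasis_def matrix_vector_mult_scale)
    finally show ?thesis
      using matfun_eigenvector[OF herm] by (metis Re_complex_of_real)
  qed
  have "D *v (matfun f M *v v) = (\<Sum>s\<in>S. (complex_of_real (f (lam s)) * cinner s v) *s (D *v s))"
    by (simp add: matfun_expansion[OF herm S] matrix_vector_mult_lincomb)
  also have "\<dots> = matfun f M *v (D *v (\<Sum>s\<in>S. cinner s v *s s))"
    by (simp add: matrix_vector_mult_lincomb D_eig vector_smult_assoc mult.commute cong: sum.cong)
  finally show ?thesis by (simp flip: span)
qed

lemma matfun_commute_matrix:
  assumes "hermitian M" "D ** M = M ** D"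
  shows "D ** matfun f M = matfun f M ** D"
  using matfun_commute[OF assms] by (simp add: matrix_eq matrix_vector_mul_assoc[symmetric])

text \<open>Commuting Hermitian matrices that agree on \<open>v\<close> agree on each spectral component \<open>E \<mu>\<close> of \<open>v\<close>
  with respect to \<open>M\<close>, which is then an eigenvector of both.\<close>
lemma matfun_apply_eq_of_commuting:
  assumes hM: "hermitian M" and hN: "hermitian N" and MN: "M ** N = N ** M"
    and eq: "M *v v = N *v v"
  shows "matfun f M *v v = matfun f N *v v"
proof -
  obtain S lam where S: "eigenbasis M S lam"
    using hermitian_eigenbasis_exists[OF hM] by blast
  have fin: "finite S" and eig: "\<And>s. s \<in> S \<Longrightarrow> M *v s = complex_of_real (lam s) *s s"
    using S unfolding eigenbasis_def by blast+
  define E where "E \<mu> = matfun (\<lambda>x. if x = \<mu> then 1 else 0) M *v v" for \<mu>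
  have E_eq: "E \<mu> = (\<Sum>s\<in>{s \<in> S. lam s = \<mu>}. cinner s v *s s)" for \<mu>
    unfolding E_def matfun_expansion[OF hM S] sum.inter_filter[OF fin] by (rule sum.cong) auto
  have decomp: "(\<Sum>\<mu>\<in>lam ` S. complex_of_real (g \<mu>) *s E \<mu>) = matfun g M *v v" for g
  proof -
    have "(\<Sum>\<mu>\<in>lam ` S. complex_of_real (g \<mu>) *s E \<mu>)
        = (\<Sum>\<mu>\<in>lam ` S. \<Sum>s\<in>{s \<in> S. lam s = \<mu>}. (complex_of_real (g (lam s)) * cinner s v) *s s)"
      by (auto simp: E_eq vec.scale_sum_right vector_smult_assoc intro!: sum.cong)
    also have "\<dots> = matfun g M *v v"
      unfolding matfun_expansion[OF hM S] by (rule sum.image_gen[OF fin, symmetric])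
    finally show ?thesis .
  qed
  have M_E: "M *v E \<mu> = complex_of_real \<mu> *s E \<mu>" for \<mu>
    unfolding E_eq matrix_vector_mult_lincomb vec.scale_sum_right
    by (intro sum.cong refl) (auto simp: eig vector_smult_assoc mult.commute)
  have N_E: "N *v E \<mu> = complex_of_real \<mu> *s E \<mu>" for \<mu>
  proof -
    have "N *v E \<mu> = matfun (\<lambda>x. if x = \<mu> then 1 else 0) M *v (M *v v)"
      unfolding E_def eq using MN by (intro matfun_commute[OF hM]) simp
    also have "\<dots> = M *v E \<mu>"
      unfolding E_def by (rule matfun_commute[OF hM, symmetric]) simp
    finally show ?thesis by (simp add: M_E)
  qed
  have span: "v = (\<Sum>s\<in>S. cinner s v *s s)"
    using S unfolding eigenbasis_def by blast
  have v_decomp: "v = (\<Sum>\<mu>\<in>lam ` S. E \<mu>)"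
    using decomp[of "\<lambda>_. 1"] by (simp add: matfun_expansion[OF hM S] flip: span)
  have "matfun f N *v v = (\<Sum>\<mu>\<in>lam ` S. matfun f N *v E \<mu>)"
    by (subst v_decomp) (rule matrix_vector_mult_sum)
  also have "\<dots> = matfun f M *v v"
    by (simp add: matfun_eigenvector[OF hN N_E] decomp)
  finally show ?thesis ..
qed

lemma matfun_support_projection_fixes:
  assumes herm: "hermitian K" and supp: "\<And>w. K *v w = 0 \<Longrightarrow> cinner w v = 0"
  shows "matfun (\<lambda>x. if x = 0 then 0 else 1) K *v v = v"
proof -
  obtain S lam where S: "eigenbasis K S lam"
    using hermitian_eigenbasis_exists[OF herm] by blast
  have "cinner s v = 0" if "s \<in> S" "lam s = 0" for s
    using S that by (intro supp) (simp add: eigenbasis_def)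
  then have "matfun (\<lambda>x. if x = 0 then 0 else 1) K *v v = (\<Sum>s\<in>S. cinner s v *s s)"
    by (auto simp: matfun_expansion[OF herm S] intro: sum.cong)
  also have "\<dots> = v"
    using S unfolding eigenbasis_def by metis
  finally show ?thesis .
qed

lemma matfun_kernel_mono:
  assumes herm: "hermitian K" and fg: "\<And>x. f x = 0 \<Longrightarrow> g x = 0" and v: "matfun f K *v v = 0"
  shows "matfun g K *v v = 0"
proof -
  define q where "q x = (if f x = 0 then 0 else g x / f x)" for x
  have "(\<lambda>x. q x * f x) = g"
    using fg by (auto simp: q_def)
  then have "matfun g K *v v = matfun q K *v (matfun f K *v v)"
    by (simp add: matfun_mult[OF herm])
  then show ?thesis by (simp add: v)
qed

text \<open>With \<open>w = K\<^sup>a\<^sup>/\<^sup>2 L\<^sup>b\<^sup>/\<^sup>2 v\<close> the expectation is \<open>\<langle>w, w\<rangle>\<close>. No sign condition on \<open>a\<close>, \<open>b\<close> or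
  the spectra is needed: \<open>x powr c\<close> vanishes only at \<open>x = 0\<close>, so \<open>w = 0\<close> would push \<open>v\<close> into
  the kernel of \<open>K\<close> or of \<open>L\<close>.\<close>
lemma cinner_matfun_powr_pos:
  assumes hK: "hermitian K" and hL: "hermitian L" and KL: "K ** L = L ** K"
    and sK: "\<And>w. K *v w = 0 \<Longrightarrow> cinner w v = 0" and sL: "\<And>w. L *v w = 0 \<Longrightarrow> cinner w v = 0"
    and "v \<noteq> 0"
  shows "\<exists>r>0. cinner v (matfun (\<lambda>x. x powr a) K *v (matfun (\<lambda>x. x powr b) L *v v))
    = complex_of_real r"
proof -
  define K1 where "K1 = matfun (\<lambda>x. x powr (a / 2)) K"
  define L1 where "L1 = matfun (\<lambda>x. x powr (b / 2)) L"
  define PK where "PK = matfun (\<lambda>x. if x = 0 then 0 else 1) K"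
  define PL where "PL = matfun (\<lambda>x. if x = 0 then 0 else 1) L"
  have half: "(\<lambda>x::real. x powr (c / 2) * x powr (c / 2)) = (\<lambda>x. x powr c)" for c
    by (simp add: powr_add[symmetric])
  have K1_sq: "matfun (\<lambda>x. x powr a) K *v y = K1 *v (K1 *v y)" for y
    by (simp add: K1_def matfun_mult[OF hK] half)
  have L1_sq: "matfun (\<lambda>x. x powr b) L *v y = L1 *v (L1 *v y)" for y
    by (simp add: L1_def matfun_mult[OF hL] half)
  have "L1 ** K = K ** L1"
    unfolding L1_def using matfun_commute_matrix[OF hL KL] by simp
  then have L1_commute: "L1 *v (matfun f K *v y) = matfun f K *v (L1 *v y)" for f y
    by (rule matfun_commute[OF hK])
  have K1_L1: "L1 *v (K1 *v y) = K1 *v (L1 *v y)" for y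
    unfolding K1_def by (rule L1_commute)
  have K1_self_adjoint: "cinner x (K1 *v y) = cinner (K1 *v x) y" for x y
    unfolding K1_def by (rule matfun_cinner[OF hK])
  have L1_self_adjoint: "cinner x (L1 *v y) = cinner (L1 *v x) y" for x y
    unfolding L1_def by (rule matfun_cinner[OF hL])
  define w where "w = K1 *v (L1 *v v)"
  have "cinner v (matfun (\<lambda>x. x powr a) K *v (matfun (\<lambda>x. x powr b) L *v v))
      = cinner v (K1 *v (K1 *v (L1 *v (L1 *v v))))"
    by (simp add: K1_sq L1_sq)
  also have "\<dots> = cinner (K1 *v v) (L1 *v (K1 *v (L1 *v v)))"
    unfolding K1_L1 by (rule K1_self_adjoint)
  also have "\<dots> = cinner (L1 *v (K1 *v v)) (K1 *v (L1 *v v))"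
    by (rule L1_self_adjoint)
  also have "\<dots> = cinner w w"
    by (simp only: w_def K1_L1)
  finally have expect_eq:
    "cinner v (matfun (\<lambda>x. x powr a) K *v (matfun (\<lambda>x. x powr b) L *v v)) = cinner w w" .
  have "w \<noteq> 0"
  proof
    assume "w = 0"
    then have "PK *v (L1 *v v) = 0"
      unfolding w_def K1_def PK_def by (rule matfun_kernel_mono[OF hK, rotated]) simp
    moreover have "PK *v (L1 *v v) = L1 *v (PK *v v)"
      unfolding PK_def by (rule L1_commute[symmetric])
    moreover have "PK *v v = v"
      unfolding PK_def by (rule matfun_support_projection_fixes[OF hK sK])
    ultimately have "L1 *v v = 0" by simp
    then have "PL *v v = 0"
      unfolding L1_def PL_def by (rule matfun_kernel_mono[OF hL, rotated]) simp
    then show False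
      using matfun_support_projection_fixes[OF hL sL] \<open>v \<noteq> 0\<close> by (simp add: PL_def)
  qed
  then show ?thesis
    using expect_eq by (intro exI[of _ "(norm w)\<^sup>2"]) (simp add: cinner_self)
qed

section \<open>Reduced density operators\<close>

lemma if_zero_mult: "(if P then a else 0) * b = (if P then a * b else (0::'a::mult_zero))"
  by simp

lemma mult_if_zero: "a * (if P then b else 0) = (if P then a * b else (0::'a::mult_zero))"
  by simp

lemma sum_if_zero: "(\<Sum>x\<in>A. if P then f x else 0) = (if P then (\<Sum>x\<in>A. f x) else 0)"
  by simp

lemma sum_UNIV_prod:
  "(\<Sum>x\<in>(UNIV :: ('p::finite \<times> 'q::finite) set). F x) = (\<Sum>p\<in>UNIV. \<Sum>q\<in>UNIV. F (p, q))"
  by (simp add: sum.cartesian_product UNIV_Times_UNIV[symmetric] del: UNIV_Times_UNIV)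

lemma bij_pair_cases:
  assumes "bij (case_prod h)" and "\<And>p q. P (h p q)"
  shows "P i"
proof -
  obtain pq where "i = case_prod h pq"
    using bij_is_surj[OF assms(1)] by (metis surjD)
  then show ?thesis using assms(2) by (cases pq) simp
qed

lemma sum_bij_pair:
  fixes h :: "'p::finite \<Rightarrow> 'q::finite \<Rightarrow> 'i::finite"
  assumes "bij (case_prod h)"
  shows "(\<Sum>i\<in>UNIV. F i) = (\<Sum>p\<in>UNIV. \<Sum>q\<in>UNIV. F (h p q))"
  using sum.reindex_bij_betw[OF assms, of F] by (simp add: sum_UNIV_prod)

text \<open>\<open>reduced h \<Psi>\<close> is the reduced density operator of \<open>|\<Psi>\<rangle>\<langle>\<Psi>|\<close> on the first factor, tensored
  with the identity on the second, for the identification of \<open>'i\<close> with \<open>'p \<times> 'q\<close> given by \<open>h\<close>.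
  The complementary subsystem is described by \<open>h'\<close> with \<open>h' q p = h p q\<close>.\<close>
definition reduced :: "('p \<Rightarrow> 'q::finite \<Rightarrow> 'i::finite) \<Rightarrow> complex^'i \<Rightarrow> complex^'i^'i" where
  "reduced h \<Psi> = (\<chi> i j. case (inv (case_prod h) i, inv (case_prod h) j) of ((p, q), (p', q')) \<Rightarrow>
      if q = q' then (\<Sum>t\<in>UNIV. \<Psi> $ h p t * cnj (\<Psi> $ h p' t)) else 0)"

context
  fixes h :: "'p::finite \<Rightarrow> 'q::finite \<Rightarrow> 'i::finite"
  assumes h: "bij (case_prod h)"
begin

lemma vec_eq_iff_bij_pair: "v = w \<longleftrightarrow> (\<forall>p q. v $ h p q = w $ h p q)"
  by (auto simp: vec_eq_iff intro: bij_pair_cases[OF h])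

lemma reduced_entry:
  "reduced h \<Psi> $ h p q $ h p' q' = (if q = q' then (\<Sum>t\<in>UNIV. \<Psi> $ h p t * cnj (\<Psi> $ h p' t)) else 0)"
proof -
  have "inv (case_prod h) (h p q) = (p, q)" for p q
    using inv_f_f[OF bij_is_inj[OF h], of "(p, q)"] by simp
  then show ?thesis by (simp add: reduced_def)
qed

lemma reduced_eqI:
  assumes "\<And>p q p' q'. A $ h p q $ h p' q'
    = (if q = q' then (\<Sum>t\<in>UNIV. \<Psi> $ h p t * cnj (\<Psi> $ h p' t)) else 0)"
  shows "A = reduced h \<Psi>"
  by (simp add: vec_eq_iff_bij_pair reduced_entry assms)

lemma reduced_hermitian: "hermitian (reduced h \<Psi>)"
  unfolding hermitian_def
proof (intro allI)
  fix i j
  show "reduced h \<Psi> $ i $ j = cnj (reduced h \<Psi> $ j $ i)"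
    by (rule bij_pair_cases[OF h, of _ i], rule bij_pair_cases[OF h, of _ j])
      (simp add: reduced_entry cnj_sum mult.commute)
qed

lemma reduced_apply:
  "(reduced h \<Psi> *v v) $ h p q = (\<Sum>p'\<in>UNIV. \<Sum>t\<in>UNIV. \<Psi> $ h p t * cnj (\<Psi> $ h p' t) * v $ h p' q)"
  by (simp add: matrix_vector_mult_def sum_bij_pair[OF h] reduced_entry sum_distrib_right
      if_zero_mult)

lemma reduced_kernel_orthogonal:
  assumes v: "reduced h \<Psi> *v v = 0"
  shows "cinner v \<Psi> = 0"
proof -
  define c where "c q' t = (\<Sum>p\<in>UNIV. cnj (\<Psi> $ h p t) * v $ h p q')" for q' t
  have row: "(\<Sum>t\<in>UNIV. \<Psi> $ h p t * c q' t) = 0" for p q'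
  proof -
    have "0 = (\<Sum>p'\<in>UNIV. \<Sum>t\<in>UNIV. \<Psi> $ h p t * cnj (\<Psi> $ h p' t) * v $ h p' q')"
      using v by (simp flip: reduced_apply)
    also have "\<dots> = (\<Sum>t\<in>UNIV. \<Psi> $ h p t * c q' t)"
      by (subst sum.swap) (simp add: c_def sum_distrib_left mult.assoc)
    finally show ?thesis by simp
  qed
  have "c q' t = 0" for q' t
  proof -
    have cnj_c: "cnj (c q' t) = (\<Sum>p\<in>UNIV. \<Psi> $ h p t * cnj (v $ h p q'))" for t
      by (simp add: c_def cnj_sum mult.commute)
    have "cinner (\<chi> t. c q' t) (\<chi> t. c q' t)
        = (\<Sum>t\<in>UNIV. \<Sum>p\<in>UNIV. cnj (v $ h p q') * (\<Psi> $ h p t * c q' t))"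
      by (simp add: cinner_def cnj_c sum_distrib_left mult_ac)
    also have "\<dots> = (\<Sum>p\<in>UNIV. cnj (v $ h p q') * (\<Sum>t\<in>UNIV. \<Psi> $ h p t * c q' t))"
      by (subst sum.swap) (simp add: sum_distrib_left)
    also have "\<dots> = 0" by (simp add: row)
    finally show ?thesis by (simp add: cinner_self_eq_0 vec_eq_iff)
  qed
  moreover have "cinner v \<Psi> = (\<Sum>q\<in>UNIV. cnj (c q q))"
  proof -
    have "cinner v \<Psi> = (\<Sum>p\<in>UNIV. \<Sum>q\<in>UNIV. cnj (v $ h p q) * \<Psi> $ h p q)"
      by (simp add: cinner_def sum_bij_pair[OF h])
    also have "\<dots> = (\<Sum>q\<in>UNIV. \<Sum>p\<in>UNIV. cnj (v $ h p q) * \<Psi> $ h p q)"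
      by (rule sum.swap)
    finally show ?thesis by (simp add: c_def cnj_sum mult.commute)
  qed
  ultimately show ?thesis by simp
qed

end

context
  fixes h :: "'p::finite \<Rightarrow> 'q::finite \<Rightarrow> 'i::finite" and h' :: "'q \<Rightarrow> 'p \<Rightarrow> 'i"
  assumes h: "bij (case_prod h)" and h': "\<And>p q. h' q p = h p q"
begin

lemma bij_complement: "bij (case_prod h')"
proof -
  have "case_prod h' = case_prod h \<circ> prod.swap"
    using h' by auto
  then show ?thesis using h by (simp add: bij_comp)
qed

lemma reduced_complement_entry:
  "reduced h' \<Psi> $ h p q $ h p' q' = (if p = p' then (\<Sum>s\<in>UNIV. \<Psi> $ h s q * cnj (\<Psi> $ h s q')) else 0)"
  using reduced_entry[OF bij_complement, of \<Psi> q p q' p'] by (simp add: h')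

text \<open>For a pure state, \<open>(\<rho>\<^sub>P \<otimes> 1) \<Psi> = (1 \<otimes> \<rho>\<^sub>Q) \<Psi>\<close>: both sides equal \<open>A A\<^sup>* A\<close> for the
  coefficient matrix \<open>A\<close> of \<open>\<Psi>\<close>.\<close>
lemma reduced_apply_self_complement: "reduced h \<Psi> *v \<Psi> = reduced h' \<Psi> *v \<Psi>"
proof -
  have "(reduced h' \<Psi> *v \<Psi>) $ h p q = (reduced h \<Psi> *v \<Psi>) $ h p q" for p q
  proof -
    have "(reduced h' \<Psi> *v \<Psi>) $ h p q
        = (\<Sum>q'\<in>UNIV. \<Sum>s\<in>UNIV. \<Psi> $ h s q * cnj (\<Psi> $ h s q') * \<Psi> $ h p q')"
      using reduced_apply[OF bij_complement, of \<Psi> \<Psi> q p] by (simp add: h')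
    also have "\<dots> = (\<Sum>s\<in>UNIV. \<Sum>q'\<in>UNIV. \<Psi> $ h s q * cnj (\<Psi> $ h s q') * \<Psi> $ h p q')"
      by (rule sum.swap)
    also have "\<dots> = (reduced h \<Psi> *v \<Psi>) $ h p q"
      by (simp add: reduced_apply[OF h] mult_ac)
    finally show ?thesis .
  qed
  then show ?thesis by (simp add: vec_eq_iff_bij_pair[OF h])
qed

lemma reduced_mult_complement_entry:
  "(reduced h \<Psi> ** reduced h' \<Psi>) $ h p q $ h p' q'
    = (\<Sum>t\<in>UNIV. \<Psi> $ h p t * cnj (\<Psi> $ h p' t)) * (\<Sum>s\<in>UNIV. \<Psi> $ h s q * cnj (\<Psi> $ h s q'))"
  by (simp add: matrix_matrix_mult_def sum_bij_pair[OF h] reduced_entry[OF h]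
      reduced_complement_entry if_zero_mult mult_if_zero)

end

lemma reduced_complement_commute:
  fixes h :: "'p::finite \<Rightarrow> 'q::finite \<Rightarrow> 'i::finite"
  assumes h: "bij (case_prod h)" and h': "\<And>p q. h' q p = h p q"
  shows "reduced h \<Psi> ** reduced h' \<Psi> = reduced h' \<Psi> ** reduced h \<Psi>"
proof -
  have h_swap: "h q p = h' p q" for p q by (simp add: h')
  have "(reduced h' \<Psi> ** reduced h \<Psi>) $ h' q p $ h' q' p'
      = (\<Sum>t\<in>UNIV. \<Psi> $ h' q t * cnj (\<Psi> $ h' q' t)) * (\<Sum>s\<in>UNIV. \<Psi> $ h' s p * cnj (\<Psi> $ h' s p'))"
    for p q p' q'
    by (rule reduced_mult_complement_entry[OF bij_complement[OF h h'] h_swap])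
  then have "(reduced h' \<Psi> ** reduced h \<Psi>) $ h p q $ h p' q'
      = (reduced h \<Psi> ** reduced h' \<Psi>) $ h p q $ h p' q'" for p q p' q'
    by (simp add: reduced_mult_complement_entry[OF h h'] h' mult.commute)
  then show ?thesis by (simp add: vec_eq_iff_bij_pair[OF h])
qed

text \<open>\<open>K\<close> and \<open>L\<close> are the reduced operators of the subsystems \<open>xy\<close> and \<open>xz\<close> of a state that factors
  off \<open>x\<close>. Both products equal \<open>(\<Sum>|\<phi>|\<^sup>2) |\<phi>\<rangle>\<langle>\<phi>| \<otimes> A \<otimes> B \<otimes> 1\<close>, so \<open>\<phi>\<close> need not be normalised.\<close>
lemma reduced_commute_of_factor:
  fixes H :: "'x::finite \<Rightarrow> 'y::finite \<Rightarrow> 'z::finite \<Rightarrow> 'w::finite \<Rightarrow> 'i::finite"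
  assumes H: "bij (\<lambda>(x, y, z, w). H x y z w)"
    and \<Psi>: "\<And>x y z w. \<Psi> $ H x y z w = \<phi> x * \<psi> y z w"
    and K: "\<And>x y z w x' y' z' w'. K $ H x y z w $ H x' y' z' w' =
      (if z = z' \<and> w = w' then (\<Sum>z''\<in>UNIV. \<Sum>w''\<in>UNIV. \<Psi> $ H x y z'' w'' * cnj (\<Psi> $ H x' y' z'' w''))
       else 0)"
    and L: "\<And>x y z w x' y' z' w'. L $ H x y z w $ H x' y' z' w' =
      (if y = y' \<and> w = w' then (\<Sum>y''\<in>UNIV. \<Sum>w''\<in>UNIV. \<Psi> $ H x y'' z w'' * cnj (\<Psi> $ H x' y'' z' w''))
       else 0)"
  shows "K ** L = L ** K"
proof -
  define A where "A y y' = (\<Sum>z\<in>UNIV. \<Sum>w\<in>UNIV. \<psi> y z w * cnj (\<psi> y' z w))" for y y'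
  define B where "B z z' = (\<Sum>y\<in>UNIV. \<Sum>w\<in>UNIV. \<psi> y z w * cnj (\<psi> y z' w))" for z z'
  have K': "K $ H x y z w $ H x' y' z' w'
      = (if z = z' then if w = w' then \<phi> x * cnj (\<phi> x') * A y y' else 0 else 0)"
    for x y z w x' y' z' w'
    by (simp add: K \<Psi> A_def sum_distrib_left mult_ac)
  have L': "L $ H x y z w $ H x' y' z' w'
      = (if y = y' then if w = w' then \<phi> x * cnj (\<phi> x') * B z z' else 0 else 0)"
    for x y z w x' y' z' w'
    by (simp add: L \<Psi> B_def sum_distrib_left mult_ac)
  note sum_H = sum_bij_pair[OF H, simplified sum_UNIV_prod]
  have "(K ** L) $ H x y z w $ H x' y' z' w'
      = (if w = w' then \<phi> x * cnj (\<phi> x') * A y y' * B z z' * (\<Sum>p\<in>UNIV. cnj (\<phi> p) * \<phi> p) else 0)"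
    and "(L ** K) $ H x y z w $ H x' y' z' w'
      = (if w = w' then \<phi> x * cnj (\<phi> x') * A y y' * B z z' * (\<Sum>p\<in>UNIV. cnj (\<phi> p) * \<phi> p) else 0)"
    for x y z w x' y' z' w'
    by (simp_all add: matrix_matrix_mult_def sum_H K' L' if_zero_mult mult_if_zero sum_if_zero
        sum_distrib_left mult_ac cong: if_cong)
  then show ?thesis
    by (simp add: vec_eq_iff_bij_pair[OF H] split_paired_all)
qed

lemma reduced_or_complement:
  fixes h :: "'p::finite \<Rightarrow> 'q::finite \<Rightarrow> 'i::finite"
  assumes h: "bij (case_prod h)" and h': "\<And>p q. h' q p = h p q"
    and K: "K \<in> {reduced h \<Psi>, reduced h' \<Psi>}"
  shows "hermitian K"
    and "\<And>w. K *v w = 0 \<Longrightarrow> cinner w \<Psi> = 0"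
    and "matfun f K *v \<Psi> = matfun f (reduced h \<Psi>) *v \<Psi>"
proof -
  note h_complement = bij_complement[OF h h']
  show "hermitian K"
    using K reduced_hermitian[OF h] reduced_hermitian[OF h_complement] by auto
  show "\<And>w. K *v w = 0 \<Longrightarrow> cinner w \<Psi> = 0"
    using K reduced_kernel_orthogonal[OF h] reduced_kernel_orthogonal[OF h_complement] by auto
  show "matfun f K *v \<Psi> = matfun f (reduced h \<Psi>) *v \<Psi>"
    using K matfun_apply_eq_of_commuting[OF reduced_hermitian[OF h_complement]
        reduced_hermitian[OF h] reduced_complement_commute[OF h h', symmetric]
        reduced_apply_self_complement[OF h h', symmetric]]
    by auto
qed

lemma cinner_matfun_reduced_pos:
  fixes h1 :: "'p1::finite \<Rightarrow> 'q1::finite \<Rightarrow> 'i::finite"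
    and h2 :: "'p2::finite \<Rightarrow> 'q2::finite \<Rightarrow> 'i"
  assumes h1: "bij (case_prod h1)" "\<And>p q. h1' q p = h1 p q"
    and h2: "bij (case_prod h2)" "\<And>p q. h2' q p = h2 p q"
    and K: "K \<in> {reduced h1 \<Psi>, reduced h1' \<Psi>}"
    and L: "L \<in> {reduced h2 \<Psi>, reduced h2' \<Psi>}"
    and KL: "K ** L = L ** K" and "\<Psi> \<noteq> 0"
  shows "\<exists>r>0. cinner \<Psi> (matfun (\<lambda>x. x powr a) (reduced h1 \<Psi>) *v
      (matfun (\<lambda>x. x powr b) (reduced h2 \<Psi>) *v \<Psi>)) = complex_of_real r"
proof -
  note K_facts = reduced_or_complement[OF h1 K] and L_facts = reduced_or_complement[OF h2 L]
  let ?fa = "\<lambda>x::real. x powr a" and ?fb = "\<lambda>x::real. x powr b"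
  have "cinner \<Psi> (matfun ?fa (reduced h1 \<Psi>) *v (matfun ?fb (reduced h2 \<Psi>) *v \<Psi>))
      = cinner (matfun ?fa (reduced h1 \<Psi>) *v \<Psi>) (matfun ?fb (reduced h2 \<Psi>) *v \<Psi>)"
    by (rule matfun_cinner[OF reduced_hermitian[OF h1(1)]])
  also have "\<dots> = cinner (matfun ?fa K *v \<Psi>) (matfun ?fb L *v \<Psi>)"
    by (simp add: K_facts(3) L_facts(3))
  also have "\<dots> = cinner \<Psi> (matfun ?fa K *v (matfun ?fb L *v \<Psi>))"
    by (rule matfun_cinner[OF K_facts(1), symmetric])
  finally show ?thesis
    using cinner_matfun_powr_pos[OF K_facts(1) L_facts(1) KL K_facts(2) L_facts(2) \<open>\<Psi> \<noteq> 0\<close>]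
    by simp
qed

section \<open>Four subsystems\<close>

definition rhoCD :: "('a::finite, 'b::finite, 'c::finite, 'd::finite) state \<Rightarrow> ('a, 'b, 'c, 'd) oper"
  where
  "rhoCD \<Psi> = (\<chi> i j. case (i, j) of ((a, b, c, d), (a', b', c', d')) \<Rightarrow>
      (if a = a' \<and> b = b'
       then (\<Sum>x\<in>UNIV. \<Sum>y\<in>UNIV. \<Psi> $ (x, y, c, d) * cnj (\<Psi> $ (x, y, c', d')))
       else 0))"

definition rhoAD :: "('a::finite, 'b::finite, 'c::finite, 'd::finite) state \<Rightarrow> ('a, 'b, 'c, 'd) oper"
  where
  "rhoAD \<Psi> = (\<chi> i j. case (i, j) of ((a, b, c, d), (a', b', c', d')) \<Rightarrow>
      (if b = b' \<and> c = c'
       then (\<Sum>x\<in>UNIV. \<Sum>y\<in>UNIV. \<Psi> $ (a, x, y, d) * cnj (\<Psi> $ (a', x, y, d')))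
       else 0))"

lemma rhoAB_rhoAD_commute_of_factor_A:
  assumes "\<And>a b c d. \<Psi> $ (a, b, c, d) = \<psi> (b, c, d) * \<phi> a"
  shows "rhoAB \<Psi> ** rhoAD \<Psi> = rhoAD \<Psi> ** rhoAB \<Psi>"
  by (rule reduced_commute_of_factor[where \<Psi> = \<Psi> and \<phi> = \<phi>
        and H = "\<lambda>x y z w. (x, y, w, z)" and \<psi> = "\<lambda>y z w. \<psi> (y, w, z)"])
    (auto simp: assms bij_def inj_def surj_def rhoAB_def rhoAD_def intro: sum.swap)

lemma rhoAB_rhoBC_commute_of_factor_B:
  assumes "\<And>a b c d. \<Psi> $ (a, b, c, d) = \<psi> (a, c, d) * \<phi> b"
  shows "rhoAB \<Psi> ** rhoBC \<Psi> = rhoBC \<Psi> ** rhoAB \<Psi>"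
  by (rule reduced_commute_of_factor[where \<Psi> = \<Psi> and \<phi> = \<phi>
        and H = "\<lambda>x y z w. (y, x, z, w)" and \<psi> = "\<lambda>y z w. \<psi> (y, z, w)"])
    (auto simp: assms bij_def inj_def surj_def rhoAB_def rhoBC_def)

lemma rhoCD_rhoBC_commute_of_factor_C:
  assumes "\<And>a b c d. \<Psi> $ (a, b, c, d) = \<psi> (a, b, d) * \<phi> c"
  shows "rhoCD \<Psi> ** rhoBC \<Psi> = rhoBC \<Psi> ** rhoCD \<Psi>"
  by (rule reduced_commute_of_factor[where \<Psi> = \<Psi> and \<phi> = \<phi>
        and H = "\<lambda>x y z w. (w, z, x, y)" and \<psi> = "\<lambda>y z w. \<psi> (w, z, y)"])
    (auto simp: assms bij_def inj_def surj_def rhoCD_def rhoBC_def intro: sum.swap)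

lemma rhoCD_rhoAD_commute_of_factor_D:
  assumes "\<And>a b c d. \<Psi> $ (a, b, c, d) = \<psi> (a, b, c) * \<phi> d"
  shows "rhoCD \<Psi> ** rhoAD \<Psi> = rhoAD \<Psi> ** rhoCD \<Psi>"
  by (rule reduced_commute_of_factor[where \<Psi> = \<Psi> and \<phi> = \<phi>
        and H = "\<lambda>x y z w. (z, w, y, x)" and \<psi> = "\<lambda>y z w. \<psi> (z, w, y)"])
    (auto simp: assms bij_def inj_def surj_def rhoCD_def rhoAD_def intro: sum.swap)

lemma rhoAB_eq_reduced: "rhoAB \<Psi> = reduced (\<lambda>(a, b) (c, d). (a, b, c, d)) \<Psi>"
  by (rule reduced_eqI)
    (force simp: bij_def inj_def surj_def, simp add: rhoAB_def sum_UNIV_prod split_paired_all)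

lemma rhoCD_eq_reduced: "rhoCD \<Psi> = reduced (\<lambda>(c, d) (a, b). (a, b, c, d)) \<Psi>"
  by (rule reduced_eqI)
    (force simp: bij_def inj_def surj_def, simp add: rhoCD_def sum_UNIV_prod split_paired_all)

lemma rhoBC_eq_reduced: "rhoBC \<Psi> = reduced (\<lambda>(b, c) (a, d). (a, b, c, d)) \<Psi>"
  by (rule reduced_eqI)
    (force simp: bij_def inj_def surj_def, simp add: rhoBC_def sum_UNIV_prod split_paired_all)

lemma rhoAD_eq_reduced: "rhoAD \<Psi> = reduced (\<lambda>(a, d) (b, c). (a, b, c, d)) \<Psi>"
  by (rule reduced_eqI)
    (force simp: bij_def inj_def surj_def, simp add: rhoAD_def sum_UNIV_prod split_paired_all)

lemma expect_mpow_rhoAB_rhoBC_pos: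
  fixes \<Psi> :: "('a::finite, 'b::finite, 'c::finite, 'd::finite) state"
  assumes "K \<in> {rhoAB \<Psi>, rhoCD \<Psi>}" "L \<in> {rhoBC \<Psi>, rhoAD \<Psi>}" "K ** L = L ** K" "\<Psi> \<noteq> 0"
  shows "\<exists>r>0. expect (mpow (rhoAB \<Psi>) \<alpha> ** mpow (rhoBC \<Psi>) \<beta>) \<Psi> = complex_of_real r"
proof -
  let ?fa = "\<lambda>x::real. x powr \<alpha>" and ?fb = "\<lambda>x::real. x powr \<beta>"
  have "expect (mpow (rhoAB \<Psi>) \<alpha> ** mpow (rhoBC \<Psi>) \<beta>) \<Psi>
      = cinner \<Psi> (matfun ?fa (rhoAB \<Psi>) *v (matfun ?fb (rhoBC \<Psi>) *v \<Psi>))"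
    by (simp add: expect_def cinner_def mpow_eq_matfun matrix_vector_mul_assoc[symmetric])
  moreover have "\<exists>r>0. cinner \<Psi> (matfun ?fa (rhoAB \<Psi>) *v (matfun ?fb (rhoBC \<Psi>) *v \<Psi>))
      = complex_of_real r"
    unfolding rhoAB_eq_reduced rhoBC_eq_reduced
    by (rule cinner_matfun_reduced_pos[where K = K and L = L
          and h1' = "\<lambda>(c, d) (a, b). (a, b, c, d)" and h2' = "\<lambda>(a, d) (b, c). (a, b, c, d)"])
      (use assms in \<open>auto simp: bij_def inj_def surj_def
        rhoAB_eq_reduced rhoBC_eq_reduced rhoCD_eq_reduced rhoAD_eq_reduced\<close>)
  ultimately show ?thesis by simp
qed

lemma unit_vector_nonzero: "(\<Sum>x\<in>UNIV. (cmod (f x))\<^sup>2) = 1 \<Longrightarrow> \<exists>x. f x \<noteq> 0"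
  by (rule ccontr) simp

theorem mainTheorem11:
  fixes \<Psi> :: "('a::finite, 'b::finite, 'c::finite, 'd::finite) state"
    and \<alpha> \<beta> :: real
  assumes prod:
    "(\<exists>(\<psi> :: 'b \<times> 'c \<times> 'd \<Rightarrow> complex) (\<phi> :: 'a \<Rightarrow> complex).
        (\<Sum>x\<in>UNIV. (cmod (\<psi> x))\<^sup>2) = 1 \<and> (\<Sum>x\<in>UNIV. (cmod (\<phi> x))\<^sup>2) = 1 \<and>
        (\<forall>a b c d. \<Psi> $ (a, b, c, d) = \<psi> (b, c, d) * \<phi> a))
   \<or> (\<exists>(\<psi> :: 'a \<times> 'c \<times> 'd \<Rightarrow> complex) (\<phi> :: 'b \<Rightarrow> complex).
        (\<Sum>x\<in>UNIV. (cmod (\<psi> x))\<^sup>2) = 1 \<and> (\<Sum>x\<in>UNIV. (cmod (\<phi> x))\<^sup>2) = 1 \<and>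
        (\<forall>a b c d. \<Psi> $ (a, b, c, d) = \<psi> (a, c, d) * \<phi> b))
   \<or> (\<exists>(\<psi> :: 'a \<times> 'b \<times> 'd \<Rightarrow> complex) (\<phi> :: 'c \<Rightarrow> complex).
        (\<Sum>x\<in>UNIV. (cmod (\<psi> x))\<^sup>2) = 1 \<and> (\<Sum>x\<in>UNIV. (cmod (\<phi> x))\<^sup>2) = 1 \<and>
        (\<forall>a b c d. \<Psi> $ (a, b, c, d) = \<psi> (a, b, d) * \<phi> c))
   \<or> (\<exists>(\<psi> :: 'a \<times> 'b \<times> 'c \<Rightarrow> complex) (\<phi> :: 'd \<Rightarrow> complex).
        (\<Sum>x\<in>UNIV. (cmod (\<psi> x))\<^sup>2) = 1 \<and> (\<Sum>x\<in>UNIV. (cmod (\<phi> x))\<^sup>2) = 1 \<and>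
        (\<forall>a b c d. \<Psi> $ (a, b, c, d) = \<psi> (a, b, c) * \<phi> d))"
    and "\<alpha> > 0" and "\<beta> > 0"
  shows "Im (expect (mpow (rhoAB \<Psi>) \<alpha> ** mpow (rhoBC \<Psi>) \<beta>) \<Psi>) = 0
       \<and> Re (expect (mpow (rhoAB \<Psi>) \<alpha> ** mpow (rhoBC \<Psi>) \<beta>) \<Psi>) > 0
       \<and> omega \<alpha> \<beta> \<Psi> = 1"
proof -
  have "\<Psi> \<noteq> 0"
    using prod by (auto dest!: unit_vector_nonzero)
  have "\<exists>K\<in>{rhoAB \<Psi>, rhoCD \<Psi>}. \<exists>L\<in>{rhoBC \<Psi>, rhoAD \<Psi>}. K ** L = L ** K"
    using prod
    by (elim disjE exE conjE)
      (blast intro: rhoAB_rhoAD_commute_of_factor_A rhoAB_rhoBC_commute_of_factor_B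
         rhoCD_rhoBC_commute_of_factor_C rhoCD_rhoAD_commute_of_factor_D)+
  then obtain r where "r > 0" "expect (mpow (rhoAB \<Psi>) \<alpha> ** mpow (rhoBC \<Psi>) \<beta>) \<Psi> = complex_of_real r"
    using expect_mpow_rhoAB_rhoBC_pos \<open>\<Psi> \<noteq> 0\<close> by blast
  then show ?thesis
    by (simp add: omega_def)
qed

end
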